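(* For every $k\ge2$ and every $n\ge2$, the families $\mathrm{SLT}_k$ and $\mathrm{REG}_n^Z$ are incomparable (neither is contained in the other); likewise, for every $n\ge 2$, the families $\mathrm{SLT}$ and $\mathrm{REG}_n^Z$ are incomparable.
   Context: Strictly locally testable languages: let $V$ be an alphabet and $k\ge1$. For $B,I,E\subseteq V^k$ and $F\subseteq V^{\le k-1}$, $\mathrm{slt}(B,I,E,F)$ is the language over $V$ consisting of all words in $F$ together with all words $a_1\cdots a_n$ ($a_i\in V$, $n\ge k$) with $a_1\cdots a_k\in B$, $a_{j+1}\cdots a_{j+k}\in I$ for all $1\le j\le n-k-1$, and $a_{n-k+1}\cdots a_n\in E$. $\mathrm{SLT}_k$ is the family of languages of this form and $\mathrm{SLT}=\bigcup_{k\ge1}\mathrm{SLT}_k$. For a regular language $L\subseteq V^*$, $\mathrm{State}(L)$ is the minimum number of states of a deterministic finite automaton over $V$ with total transition function accepting $L$; $\mathrm{REG}_n^Z=\{L\text{ regular}:\mathrm{State}(L)\le n\}$. *)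

theory Defs
  imports Main
begin

definition alphabet :: "nat set \<Rightarrow> bool" where
  "alphabet V \<longleftrightarrow> finite V \<and> V \<noteq> {}"

definition words_eq :: "nat set \<Rightarrow> nat \<Rightarrow> nat list set" where
  "words_eq V k = {w. set w \<subseteq> V \<and> length w = k}"

definition words_lt :: "nat set \<Rightarrow> nat \<Rightarrow> nat list set" where
  "words_lt V k = {w. set w \<subseteq> V \<and> length w \<le> k - 1}"

text \<open>slt(B,I,E,F): the word a_1...a_n (0-indexed list w) has prefix a_1..a_k in B,
  every factor a_{j+1}..a_{j+k} (= take k (drop j w)) for 1 <= j <= n-k-1 in I,
  and suffix a_{n-k+1}..a_n (= drop (n-k) w) in E.\<close>
definition slt :: "nat set \<Rightarrow> nat \<Rightarrow> nat list set \<Rightarrow> nat list set \<Rightarrow> nat list set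
                   \<Rightarrow> nat list set \<Rightarrow> nat list set" where
  "slt V k B I E F = F \<union>
     {w. set w \<subseteq> V \<and> length w \<ge> k \<and> take k w \<in> B
         \<and> (\<forall>j. 1 \<le> j \<and> j \<le> length w - k - 1 \<longrightarrow> take k (drop j w) \<in> I)
         \<and> drop (length w - k) w \<in> E}"

definition SLT_k :: "nat set \<Rightarrow> nat \<Rightarrow> nat list set \<Rightarrow> bool" where
  "SLT_k V k L \<longleftrightarrow> k \<ge> 1 \<and> (\<exists>B I E F. B \<subseteq> words_eq V k \<and> I \<subseteq> words_eq V k
      \<and> E \<subseteq> words_eq V k \<and> F \<subseteq> words_lt V k \<and> L = slt V k B I E F)"

definition SLT :: "nat set \<Rightarrow> nat list set \<Rightarrow> bool" where
  "SLT V L \<longleftrightarrow> (\<exists>k\<ge>1. SLT_k V k L)"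

definition is_dfa :: "nat set \<Rightarrow> nat set \<Rightarrow> nat \<Rightarrow> (nat \<Rightarrow> nat \<Rightarrow> nat) \<Rightarrow> nat set \<Rightarrow> bool" where
  "is_dfa V Q q0 d Fs \<longleftrightarrow> finite Q \<and> q0 \<in> Q \<and> Fs \<subseteq> Q
      \<and> (\<forall>q\<in>Q. \<forall>a\<in>V. d q a \<in> Q)"

definition dfa_lang :: "nat set \<Rightarrow> nat \<Rightarrow> (nat \<Rightarrow> nat \<Rightarrow> nat) \<Rightarrow> nat set \<Rightarrow> nat list set" where
  "dfa_lang V q0 d Fs = {w. set w \<subseteq> V \<and> foldl d q0 w \<in> Fs}"

definition accepts_with :: "nat set \<Rightarrow> nat \<Rightarrow> nat list set \<Rightarrow> bool" where
  "accepts_with V m L \<longleftrightarrow> (\<exists>Q q0 d Fs. is_dfa V Q q0 d Fs \<and> card Q = m \<and> L = dfa_lang V q0 d Fs)"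

definition regular :: "nat set \<Rightarrow> nat list set \<Rightarrow> bool" where
  "regular V L \<longleftrightarrow> (\<exists>m. accepts_with V m L)"

definition State :: "nat set \<Rightarrow> nat list set \<Rightarrow> nat" where
  "State V L = (LEAST m. accepts_with V m L)"

definition REG_Z :: "nat set \<Rightarrow> nat \<Rightarrow> nat list set \<Rightarrow> bool" where
  "REG_Z V n L \<longleftrightarrow> regular V L \<and> State V L \<le> n"

end

theory Submission
  imports Defs
begin

text \<open>Over the alphabet {0..n+k}, the words whose letters increase by one at each step form an
  SLT_k language for every k \<ge> 2, since this is a condition on factors of length k. Yet the
  prefixes [0..<i], 1 \<le> i \<le> n+1, are pairwise distinguishable, so every DFA for it has more than
  n states. Conversely, the unary words of even length are accepted by a 2-state DFA, but no
  SLT_k language equals it: all factors of a unary word coincide, so with a long word an SLT_k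
  language also contains the word one letter longer.\<close>

definition consecutive :: "nat list \<Rightarrow> bool" where
  "consecutive xs \<longleftrightarrow> (\<forall>p. Suc p < length xs \<longrightarrow> xs ! Suc p = Suc (xs ! p))"

lemma consecutive_upt: "consecutive [a..<b]"
  unfolding consecutive_def by auto

lemma consecutive_take: "consecutive xs \<Longrightarrow> consecutive (take k xs)"
  unfolding consecutive_def by auto

lemma consecutive_drop: "consecutive xs \<Longrightarrow> consecutive (drop k xs)"
  unfolding consecutive_def by (auto simp: add.commute[of k])

lemma slt_window_mem:
  assumes "w \<in> slt V k B I E F" "w \<notin> F" "j \<le> length w - k"
  shows "take k (drop j w) \<in> B \<union> I \<union> E"
proof -
  have len: "k \<le> length w" and "take k w \<in> B"
    and inner: "\<And>j. 1 \<le> j \<Longrightarrow> j \<le> length w - k - 1 \<Longrightarrow> take k (drop j w) \<in> I"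
    and "drop (length w - k) w \<in> E"
    using assms(1,2) unfolding slt_def by auto
  moreover have "take k (drop (length w - k) w) = drop (length w - k) w"
    using len by simp
  ultimately show ?thesis
  proof (cases "j = 0 \<or> j = length w - k")
    case False
    then have "1 \<le> j" "j \<le> length w - k - 1"
      using assms(3) by auto
    then show ?thesis
      using inner by blast
  qed auto
qed

lemma slt_memI_windows:
  assumes "set w \<subseteq> V" "k \<le> length w"
    and "\<And>j. j \<le> length w - k \<Longrightarrow> take k (drop j w) \<in> S"
  shows "w \<in> slt V k S S S F"
proof -
  have "take k w \<in> S" using assms(3)[of 0] by simp
  moreover have "drop (length w - k) w \<in> S"
    using assms(2) assms(3)[of "length w - k"] by simp
  ultimately show ?thesis
    using assms unfolding slt_def by auto
qed

text \<open>Windows of length at least 2 overlap in at least one letter, so consecutiveness of all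
  windows propagates to the whole word.\<close>
lemma consecutive_if_windows:
  assumes k: "2 \<le> k" "k \<le> length w"
    and windows: "\<And>j. j \<le> length w - k \<Longrightarrow> consecutive (take k (drop j w))"
  shows "consecutive w"
  unfolding consecutive_def
proof (intro allI impI)
  fix p assume p: "Suc p < length w"
  define j where "j = min p (length w - k)"
  have j: "j \<le> p" "Suc p < j + k" "j \<le> length w - k"
    using k p unfolding j_def by auto
  have "Suc (p - j) < length (take k (drop j w))"
    using j k by auto
  then have "take k (drop j w) ! Suc (p - j) = Suc (take k (drop j w) ! (p - j))"
    using windows[OF j(3)] unfolding consecutive_def by blast
  moreover have "j + Suc (p - j) = Suc p" "j + (p - j) = p"
    using j by auto
  ultimately show "w ! Suc p = Suc (w ! p)"
    using j p by (simp add: nth_drop)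
qed

definition consecutive_words :: "nat set \<Rightarrow> nat \<Rightarrow> nat list set" where
  "consecutive_words V k = {xs \<in> words_eq V k. consecutive xs}"

definition counting_lang :: "nat set \<Rightarrow> nat \<Rightarrow> nat list set" where
  "counting_lang V k =
     slt V k (consecutive_words V k) (consecutive_words V k) (consecutive_words V k) {}"

lemma SLT_k_counting_lang: "1 \<le> k \<Longrightarrow> SLT_k V k (counting_lang V k)"
  unfolding SLT_k_def counting_lang_def
  by (intro conjI exI[of _ "consecutive_words V k"] exI[of _ "{}"]) (auto simp: consecutive_words_def)

lemma consecutive_if_counting_lang:
  assumes "w \<in> counting_lang V k" "2 \<le> k"
  shows "consecutive w"
proof (rule consecutive_if_windows)
  show "k \<le> length w"
    using assms(1) unfolding counting_lang_def slt_def by auto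
  show "consecutive (take k (drop j w))" if "j \<le> length w - k" for j
    using slt_window_mem[OF assms(1)[unfolded counting_lang_def] _ that]
    unfolding consecutive_words_def by auto
qed (use assms in auto)

lemma upt_in_counting_lang:
  assumes "k \<le> m" "set [0..<m] \<subseteq> V"
  shows "[0..<m] \<in> counting_lang V k"
  unfolding counting_lang_def
proof (rule slt_memI_windows)
  fix j assume "j \<le> length [0..<m] - k"
  then have "take k (drop j [0..<m]) = [j..<j+k]"
    using assms(1) by (simp add: take_upt)
  moreover have "set [j..<j+k] \<subseteq> set [0..<m]"
    using \<open>j \<le> length [0..<m] - k\<close> assms(1) by auto
  ultimately show "take k (drop j [0..<m]) \<in> consecutive_words V k"
    unfolding consecutive_words_def words_eq_def using assms(2) consecutive_upt by auto
qed (use assms in auto)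

lemma foldl_in_states:
  "is_dfa V Q q0 d Fs \<Longrightarrow> q \<in> Q \<Longrightarrow> set w \<subseteq> V \<Longrightarrow> foldl d q w \<in> Q"
  by (induction w arbitrary: q) (auto simp: is_dfa_def)

text \<open>Myhill--Nerode lower bound: pairwise distinguishable words reach pairwise distinct states.\<close>
lemma card_le_dfa_states:
  assumes D: "is_dfa V Q q0 d Fs" and L: "L = dfa_lang V q0 d Fs"
    and "finite S" and words: "\<And>i. i \<in> S \<Longrightarrow> set (u i) \<subseteq> V"
    and distinguish: "\<And>i j. i \<in> S \<Longrightarrow> j \<in> S \<Longrightarrow> i \<noteq> j \<Longrightarrow>
       \<exists>z. set z \<subseteq> V \<and> (u i @ z \<in> L \<longleftrightarrow> u j @ z \<notin> L)"
  shows "card S \<le> card Q"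
proof -
  define state where "state i = foldl d q0 (u i)" for i
  have "inj_on state S"
  proof (rule inj_onI, rule ccontr)
    fix i j assume "i \<in> S" "j \<in> S" "state i = state j" "i \<noteq> j"
    moreover from distinguish[OF this(1,2,4)] obtain z
      where "set z \<subseteq> V" "u i @ z \<in> L \<longleftrightarrow> u j @ z \<notin> L" by blast
    ultimately show False
      using words unfolding L dfa_lang_def state_def by auto
  qed
  moreover have "state ` S \<subseteq> Q"
    using foldl_in_states[OF D] D words unfolding state_def is_dfa_def by auto
  moreover have "finite Q"
    using D unfolding is_dfa_def by simp
  ultimately show ?thesis
    by (rule card_inj_on_le)
qed

lemma REG_Z_E:
  assumes "REG_Z V n L"
  obtains Q q0 d Fs where "is_dfa V Q q0 d Fs" "card Q \<le> n" "L = dfa_lang V q0 d Fs"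
proof -
  from assms obtain m where m: "accepts_with V m L" and le: "State V L \<le> n"
    unfolding REG_Z_def regular_def by auto
  have "accepts_with V (State V L) L"
    unfolding State_def using m by (rule LeastI)
  then show thesis
    using that le unfolding accepts_with_def by auto
qed

lemma REG_Z_I:
  assumes "accepts_with V m L" "m \<le> n"
  shows "REG_Z V n L"
proof -
  have "State V L \<le> m"
    unfolding State_def using assms(1) by (rule Least_le)
  then show ?thesis
    using assms unfolding REG_Z_def regular_def by auto
qed

text \<open>The prefixes [0..<i], 1 \<le> i \<le> n+1, are pairwise distinguished by the suffix [i..<i+k].\<close>
lemma counting_lang_not_REG_Z:
  assumes k: "2 \<le> k"
  shows "\<not> REG_Z {0..n+k} n (counting_lang {0..n+k} k)"
proof
  let ?V = "{0..n+k}" and ?L = "counting_lang {0..n+k} k"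
  assume "REG_Z ?V n ?L"
  then obtain Q q0 d Fs where D: "is_dfa ?V Q q0 d Fs" "card Q \<le> n" "?L = dfa_lang ?V q0 d Fs"
    by (rule REG_Z_E)
  have "card {1..n+1} \<le> card Q"
  proof (rule card_le_dfa_states[OF D(1,3), where u = "\<lambda>i. [0..<i]"])
    fix i j assume i: "i \<in> {1..n+1}" and j: "j \<in> {1..n+1}" and "i \<noteq> j"
    have "[0..<i+k] \<in> ?L"
      using i by (intro upt_in_counting_lang) auto
    then have "[0..<i] @ [i..<i+k] \<in> ?L"
      using upt_add_eq_append[of 0 i k] by simp
    moreover have "[0..<j] @ [i..<i+k] \<notin> ?L"
    proof
      assume "[0..<j] @ [i..<i+k] \<in> ?L"
      then have "consecutive ([0..<j] @ [i..<i+k])"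
        using k by (rule consecutive_if_counting_lang)
      moreover have "Suc (j - 1) < length ([0..<j] @ [i..<i+k])"
        using j k by auto
      ultimately have "([0..<j] @ [i..<i+k]) ! j = Suc (([0..<j] @ [i..<i+k]) ! (j - 1))"
        unfolding consecutive_def using j by fastforce
      then show False
        using j k \<open>i \<noteq> j\<close> by (simp add: nth_append)
    qed
    moreover have "set [i..<i+k] \<subseteq> ?V"
      using i by auto
    ultimately show "\<exists>z. set z \<subseteq> ?V \<and> ([0..<i] @ z \<in> ?L \<longleftrightarrow> [0..<j] @ z \<notin> ?L)"
      by blast
  qed auto
  with D(2) show False
    by simp
qed

lemma slt_replicate_Suc:
  assumes "replicate m a \<in> slt V k B I E F" "F \<subseteq> words_lt V k" "k + 2 \<le> m"
  shows "replicate (Suc m) a \<in> slt V k B I E F"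
proof -
  have "replicate m a \<notin> F"
    using assms(2,3) unfolding words_lt_def by auto
  then have "take k (replicate m a) \<in> B" "take k (drop 1 (replicate m a)) \<in> I"
    "drop (m - k) (replicate m a) \<in> E" "a \<in> V"
    using assms(1,3) unfolding slt_def by auto
  moreover have "take k (drop 1 (replicate m a)) = replicate k a"
    using assms(3) by simp
  ultimately have "replicate k a \<in> B" "replicate k a \<in> I" "replicate k a \<in> E"
    using assms(3) by auto
  moreover have "take k (drop j (replicate (Suc m) a)) = replicate k a"
    if "j \<le> Suc m - k" for j
    using that assms(3) by (simp del: replicate_Suc)
  ultimately show ?thesis
    using \<open>a \<in> V\<close> assms(3) unfolding slt_def by (auto simp del: replicate_Suc)
qed

definition even_unary_lang :: "nat list set" where
  "even_unary_lang = {w. set w \<subseteq> {0} \<and> even (length w)}"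

lemma even_unary_lang_not_SLT_k: "\<not> SLT_k {0} k even_unary_lang"
proof
  assume "SLT_k {0} k even_unary_lang"
  then obtain B I E F where F: "F \<subseteq> words_lt {0} k"
    and L: "even_unary_lang = slt {0} k B I E F"
    unfolding SLT_k_def by auto
  have "replicate (2 * k + 2) 0 \<in> slt {0} k B I E F"
    unfolding L[symmetric] even_unary_lang_def by auto
  then have "replicate (Suc (2 * k + 2)) 0 \<in> slt {0} k B I E F"
    by (rule slt_replicate_Suc[OF _ F]) simp
  then have "replicate (Suc (2 * k + 2)) 0 \<in> even_unary_lang"
    unfolding L .
  then show False
    unfolding even_unary_lang_def by simp
qed

lemma foldl_parity: "q < 2 \<Longrightarrow> foldl (\<lambda>q _. Suc q mod 2) q w = (q + length w) mod 2"
  by (induction w arbitrary: q) (simp_all add: mod_add_left_eq)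

lemma even_unary_lang_REG_Z:
  assumes "2 \<le> n"
  shows "REG_Z {0} n even_unary_lang"
proof (rule REG_Z_I)
  let ?d = "\<lambda>q (_::nat). Suc q mod 2"
  have "is_dfa {0} {0, 1} 0 ?d {0}"
    unfolding is_dfa_def by auto
  moreover have "even_unary_lang = dfa_lang {0} 0 ?d {0}"
  proof (rule set_eqI)
    fix w :: "nat list"
    show "w \<in> even_unary_lang \<longleftrightarrow> w \<in> dfa_lang {0} 0 ?d {0}"
      using foldl_parity[of 0 w] unfolding even_unary_lang_def dfa_lang_def
      by (simp add: even_iff_mod_2_eq_zero)
  qed
  moreover have "card {0, 1 :: nat} = 2"
    by simp
  ultimately show "accepts_with {0} 2 even_unary_lang"
    unfolding accepts_with_def by blast
qed (rule assms)

theorem mainTheorem9: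
  shows "(\<forall>k n. k \<ge> 2 \<longrightarrow> n \<ge> 2 \<longrightarrow>
            (\<exists>V L. alphabet V \<and> SLT_k V k L \<and> \<not> REG_Z V n L)
          \<and> (\<exists>V L. alphabet V \<and> REG_Z V n L \<and> \<not> SLT_k V k L))
       \<and> (\<forall>n. n \<ge> 2 \<longrightarrow>
            (\<exists>V L. alphabet V \<and> SLT V L \<and> \<not> REG_Z V n L)
          \<and> (\<exists>V L. alphabet V \<and> REG_Z V n L \<and> \<not> SLT V L))"
proof -
  have alphabets: "alphabet {0}" "alphabet {0..N}" for N :: nat
    unfolding alphabet_def by auto
  have SLT_k_not_REG: "\<exists>V L. alphabet V \<and> SLT_k V k L \<and> \<not> REG_Z V n L" if "2 \<le> k" for k n
  proof (intro exI conjI)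
    show "SLT_k {0..n+k} k (counting_lang {0..n+k} k)"
      using that by (intro SLT_k_counting_lang) simp
  qed (rule alphabets(2), rule counting_lang_not_REG_Z[OF that])
  show ?thesis
  proof (intro conjI allI impI)
    fix k n :: nat assume "2 \<le> k" "2 \<le> n"
    show "\<exists>V L. alphabet V \<and> SLT_k V k L \<and> \<not> REG_Z V n L"
      using \<open>2 \<le> k\<close> by (rule SLT_k_not_REG)
    show "\<exists>V L. alphabet V \<and> REG_Z V n L \<and> \<not> SLT_k V k L"
      using alphabets(1) even_unary_lang_REG_Z[OF \<open>2 \<le> n\<close>] even_unary_lang_not_SLT_k by blast
  next
    fix n :: nat assume "2 \<le> n"
    obtain V L where "alphabet V" "SLT_k V 2 L" "\<not> REG_Z V n L"
      using SLT_k_not_REG[of 2 n] by auto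
    then show "\<exists>V L. alphabet V \<and> SLT V L \<and> \<not> REG_Z V n L"
      unfolding SLT_def using one_le_numeral by blast
    show "\<exists>V L. alphabet V \<and> REG_Z V n L \<and> \<not> SLT V L"
      using alphabets(1) even_unary_lang_REG_Z[OF \<open>2 \<le> n\<close>] even_unary_lang_not_SLT_k
      unfolding SLT_def by blast
  qed
qed

end
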